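(* Let $R$ be a unital associative ring and $n\ge1$. Let ${\cal P}^0_{LR}$ be the group of pairs $(P_1,P_2)$ of $n\times n$ permutation matrices each of which fixes the first standard basis vector, acting on $M_n(R)$ by $(P_1,P_2)(M)=P_1^{-1}MP_2$. Then ${\rm dom}(\Phi)$ and ${\rm dom}(\Psi)$ are invariant under this action, and $\Phi$ and $\Psi$ commute with it: $\Phi(P_1^{-1}AP_2)=P_1^{-1}\Phi(A)P_2$ for $A\in{\rm dom}(\Phi)$ and $\Psi(P_1^{-1}AP_2)=P_1^{-1}\Psi(A)P_2$ for $A\in{\rm dom}(\Psi)$, for all $(P_1,P_2)\in{\cal P}^0_{LR}$.
   Context: $R^*$: units of $R$. $M_n^*(R)$: invertible $n\times n$ matrices; $M_n^\star(R)$: matrices with all entries in $R^*$. $J_1(M)=M^{-1}$ on $M_n^*(R)$; $J_2(M)_{jk}=(M_{kj})^{-1}$ on $M_n^\star(R)$; $J=J_2\circ J_1$, where $g\circ f$ has domain $\{x\in{\rm dom}(f):f(x)\in{\rm dom}(g)\}$. $\widehat M_n(R)$: matrices whose first row and column consist of $1$'s. For $A=\{a_{j,k}\}\in M_n^\star(R)$, $\Lambda^L(A)_{j,k}=a_{1,1}a_{j,1}^{-1}a_{j,k}a_{1,k}^{-1}$. $\Phi(A)=J_2(\Lambda^L(A^{-1}))$ with ${\rm dom}(\Phi)={\rm dom}(J)\cap\widehat M_n(R)\cap M_n^\star(R)$, and $\Psi=J_2\circ\Phi\circ J_2$ with the natural composition domain. *)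

theory Defs
  imports "Jordan_Normal_Form.Matrix" "HOL-Combinatorics.Permutations"
begin

(* Matrices are n x n JNF matrices ('a mat in carrier_mat n n); indices are 0-based,
   so the paper's index 1 is index 0 here. R is an arbitrary unital associative ring. *)

definition is_unit_r :: "'a::ring_1 \<Rightarrow> bool" where
  "is_unit_r x \<longleftrightarrow> (\<exists>y. x * y = 1 \<and> y * x = 1)"

definition uinv :: "'a::ring_1 \<Rightarrow> 'a" where
  "uinv x = (THE y. x * y = 1 \<and> y * x = 1)"

definition inv_mats :: "nat \<Rightarrow> 'a::ring_1 mat set" where
  "inv_mats n = {M \<in> carrier_mat n n. \<exists>N \<in> carrier_mat n n. M * N = 1\<^sub>m n \<and> N * M = 1\<^sub>m n}"

definition mat_inv :: "nat \<Rightarrow> 'a::ring_1 mat \<Rightarrow> 'a mat" where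
  "mat_inv n M = (THE N. N \<in> carrier_mat n n \<and> M * N = 1\<^sub>m n \<and> N * M = 1\<^sub>m n)"

definition unit_mats :: "nat \<Rightarrow> 'a::ring_1 mat set" where
  "unit_mats n = {M \<in> carrier_mat n n. \<forall>j<n. \<forall>k<n. is_unit_r (M $$ (j,k))}"

definition J1 :: "nat \<Rightarrow> 'a::ring_1 mat \<Rightarrow> 'a mat" where
  "J1 n M = mat_inv n M"

definition J2 :: "nat \<Rightarrow> 'a::ring_1 mat \<Rightarrow> 'a mat" where
  "J2 n M = mat n n (\<lambda>(j,k). uinv (M $$ (k,j)))"

definition dom_J :: "nat \<Rightarrow> 'a::ring_1 mat set" where
  "dom_J n = {M \<in> inv_mats n. J1 n M \<in> unit_mats n}"

definition hat_mats :: "nat \<Rightarrow> 'a::ring_1 mat set" where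
  "hat_mats n = {M \<in> carrier_mat n n. (\<forall>k<n. M $$ (0,k) = 1) \<and> (\<forall>j<n. M $$ (j,0) = 1)}"

definition LambdaL :: "nat \<Rightarrow> 'a::ring_1 mat \<Rightarrow> 'a mat" where
  "LambdaL n A = mat n n (\<lambda>(j,k).
      A $$ (0,0) * uinv (A $$ (j,0)) * A $$ (j,k) * uinv (A $$ (0,k)))"

definition dom_Phi :: "nat \<Rightarrow> 'a::ring_1 mat set" where
  "dom_Phi n = dom_J n \<inter> hat_mats n \<inter> unit_mats n"

definition Phi :: "nat \<Rightarrow> 'a::ring_1 mat \<Rightarrow> 'a mat" where
  "Phi n A = J2 n (LambdaL n (mat_inv n A))"

definition dom_Psi :: "nat \<Rightarrow> 'a::ring_1 mat set" where
  "dom_Psi n = {A \<in> unit_mats n. J2 n A \<in> dom_Phi n \<and> Phi n (J2 n A) \<in> unit_mats n}"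

definition Psi :: "nat \<Rightarrow> 'a::ring_1 mat \<Rightarrow> 'a mat" where
  "Psi n A = J2 n (Phi n (J2 n A))"

definition perm_mats :: "nat \<Rightarrow> 'a::ring_1 mat set" where
  "perm_mats n = {P. \<exists>\<sigma>. \<sigma> permutes {..<n} \<and>
       P = mat n n (\<lambda>(j,k). if j = \<sigma> k then 1 else 0)}"

definition P0LR :: "nat \<Rightarrow> ('a::ring_1 mat \<times> 'a mat) set" where
  "P0LR n = {(P1,P2). P1 \<in> perm_mats n \<and> P2 \<in> perm_mats n \<and>
       P1 *\<^sub>v unit_vec n 0 = unit_vec n 0 \<and> P2 *\<^sub>v unit_vec n 0 = unit_vec n 0}"

definition act :: "nat \<Rightarrow> 'a::ring_1 mat \<times> 'a mat \<Rightarrow> 'a mat \<Rightarrow> 'a mat" where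
  "act n P M = mat_inv n (fst P) * M * snd P"

end

theory Submission
  imports Defs
begin

text \<open>A pair of permutation matrices fixing the first basis vector corresponds to permutations
  \<open>s\<close>, \<open>t\<close> of the index set fixing \<open>0\<close>, and the action \<open>P\<^sub>1\<^sup>-\<^sup>1 M P\<^sub>2\<close> simply reindexes
  the entries, \<open>M\<^sub>j\<^sub>k \<mapsto> M\<^bsub>s j, t k\<^esub>\<close>. Matrix inversion, the entrywise inverse-transpose \<open>J\<^sub>2\<close>
  (which swaps the roles of \<open>s\<close> and \<open>t\<close>) and \<open>\<Lambda>\<^sup>L\<close> (which only uses row and column \<open>0\<close>)
  all commute with such reindexings, as do the defining conditions of the domains;
  hence so do \<open>\<Phi>\<close> and \<open>\<Psi>\<close>.\<close>

definition reindex_mat :: "nat \<Rightarrow> (nat \<Rightarrow> nat) \<Rightarrow> (nat \<Rightarrow> nat) \<Rightarrow> 'a mat \<Rightarrow> 'a mat" where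
  "reindex_mat n s t M = mat n n (\<lambda>(j,k). M $$ (s j, t k))"

lemma reindex_mat_carrier [simp]: "reindex_mat n s t M \<in> carrier_mat n n"
  by (simp add: reindex_mat_def)

lemma dim_reindex_mat [simp]:
  "dim_row (reindex_mat n s t M) = n" "dim_col (reindex_mat n s t M) = n"
  by (simp_all add: reindex_mat_def)

lemma index_reindex_mat [simp]:
  "j < n \<Longrightarrow> k < n \<Longrightarrow> reindex_mat n s t M $$ (j,k) = M $$ (s j, t k)"
  by (simp add: reindex_mat_def)

lemma permutes_lessThan_less: "s permutes {..<n} \<Longrightarrow> j < n \<Longrightarrow> s j < n"
  using permutes_in_image[of s "{..<n}" j] by simp

lemma reindex_mat_mult:
  fixes A B :: "'a::semiring_0 mat"
  assumes t: "t permutes {..<n}" and s: "\<forall>j<n. s j < n" and u: "\<forall>k<n. u k < n"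
    and A: "A \<in> carrier_mat n n" and B: "B \<in> carrier_mat n n"
  shows "reindex_mat n s t A * reindex_mat n t u B = reindex_mat n s u (A * B)"
proof (rule eq_matI)
  fix j k assume "j < dim_row (reindex_mat n s u (A * B))" "k < dim_col (reindex_mat n s u (A * B))"
  then have j: "j < n" and k: "k < n" by auto
  have t_bij: "bij_betw t {0..<n} {0..<n}"
    using permutes_imp_bij[OF t] by (simp add: lessThan_atLeast0)
  have "(reindex_mat n s t A * reindex_mat n t u B) $$ (j,k)
      = (\<Sum>i\<in>{0..<n}. A $$ (s j, t i) * B $$ (t i, u k))"
    using j k by (simp add: scalar_prod_def)
  also have "\<dots> = (\<Sum>i\<in>{0..<n}. A $$ (s j, i) * B $$ (i, u k))"
    using sum.reindex_bij_betw[OF t_bij, of "\<lambda>i. A $$ (s j, i) * B $$ (i, u k)"] by simp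
  also have "\<dots> = reindex_mat n s u (A * B) $$ (j,k)"
    using j k s u A B by (simp add: scalar_prod_def)
  finally show "(reindex_mat n s t A * reindex_mat n t u B) $$ (j,k) = reindex_mat n s u (A * B) $$ (j,k)" .
qed auto

lemma reindex_mat_id: "M \<in> carrier_mat n n \<Longrightarrow> reindex_mat n id id M = M"
  by (intro eq_matI) auto

lemma reindex_mat_one:
  assumes "s permutes {..<n}"
  shows "reindex_mat n s s (1\<^sub>m n) = (1\<^sub>m n :: 'a::zero_neq_one mat)"
  using assms permutes_inj[OF assms] by (intro eq_matI) (auto simp: permutes_lessThan_less inj_eq)

lemma mat_inv_eqI:
  fixes M N :: "'a::ring_1 mat"
  assumes M: "M \<in> carrier_mat n n" and N: "N \<in> carrier_mat n n"
    and MN: "M * N = 1\<^sub>m n" and NM: "N * M = 1\<^sub>m n"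
  shows "mat_inv n M = N"
  unfolding mat_inv_def
proof (rule the_equality)
  fix N' assume "N' \<in> carrier_mat n n \<and> M * N' = 1\<^sub>m n \<and> N' * M = 1\<^sub>m n"
  then have N': "N' \<in> carrier_mat n n" and N'M: "N' * M = 1\<^sub>m n" by simp_all
  have "N' = N' * (M * N)" using N' MN by simp
  also have "\<dots> = (N' * M) * N" using assoc_mult_mat[OF N' M N] by simp
  finally show "N' = N" using N N'M by simp
qed (use assms in blast)

lemma inv_mats_mat_inv:
  fixes M :: "'a::ring_1 mat"
  assumes "M \<in> inv_mats n"
  shows "mat_inv n M \<in> carrier_mat n n" "M * mat_inv n M = 1\<^sub>m n" "mat_inv n M * M = 1\<^sub>m n"
proof -
  from assms obtain N where "M \<in> carrier_mat n n" "N \<in> carrier_mat n n"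
    and "M * N = 1\<^sub>m n" "N * M = 1\<^sub>m n" unfolding inv_mats_def by blast
  moreover from this have "mat_inv n M = N" by (rule mat_inv_eqI)
  ultimately show "mat_inv n M \<in> carrier_mat n n" "M * mat_inv n M = 1\<^sub>m n" "mat_inv n M * M = 1\<^sub>m n"
    by simp_all
qed

lemma J2_carrier [simp]: "J2 n M \<in> carrier_mat n n"
  by (simp add: J2_def)

lemma LambdaL_carrier [simp]: "LambdaL n M \<in> carrier_mat n n"
  by (simp add: LambdaL_def)

lemma Phi_carrier [simp]: "Phi n M \<in> carrier_mat n n"
  by (simp add: Phi_def)

lemma Psi_carrier [simp]: "Psi n M \<in> carrier_mat n n"
  by (simp add: Psi_def)

context
  fixes n :: nat and s t :: "nat \<Rightarrow> nat"
  assumes s: "s permutes {..<n}" and t: "t permutes {..<n}"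
begin

private lemma s_less: "\<forall>j<n. s j < n" and t_less: "\<forall>j<n. t j < n"
  using s t by (auto simp: permutes_lessThan_less)

lemma reindex_mat_inv_mats:
  fixes M :: "'a::ring_1 mat"
  assumes M: "M \<in> inv_mats n"
  shows "reindex_mat n s t M \<in> inv_mats n"
    and "mat_inv n (reindex_mat n s t M) = reindex_mat n t s (mat_inv n M)"
proof -
  have Mc: "M \<in> carrier_mat n n" using M by (simp add: inv_mats_def)
  note inv = inv_mats_mat_inv[OF M]
  have right: "reindex_mat n s t M * reindex_mat n t s (mat_inv n M) = 1\<^sub>m n"
    using reindex_mat_mult[OF t s_less s_less Mc inv(1)] inv(2) reindex_mat_one[OF s] by simp
  have left: "reindex_mat n t s (mat_inv n M) * reindex_mat n s t M = 1\<^sub>m n"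
    using reindex_mat_mult[OF s t_less t_less inv(1) Mc] inv(3) reindex_mat_one[OF t] by simp
  show "mat_inv n (reindex_mat n s t M) = reindex_mat n t s (mat_inv n M)"
    using mat_inv_eqI[OF reindex_mat_carrier reindex_mat_carrier right left] .
  show "reindex_mat n s t M \<in> inv_mats n"
    using right left unfolding inv_mats_def by auto
qed

lemma J2_reindex_mat:
  "M \<in> carrier_mat n n \<Longrightarrow> J2 n (reindex_mat n s t M) = reindex_mat n t s (J2 n M)"
  by (intro eq_matI) (auto simp: J2_def s_less t_less)

lemma reindex_mat_unit_mats: "M \<in> unit_mats n \<Longrightarrow> reindex_mat n s t M \<in> unit_mats n"
  by (auto simp: unit_mats_def s_less t_less)

context
  assumes s0: "s 0 = 0" and t0: "t 0 = 0"
begin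

lemma reindex_mat_hat_mats: "M \<in> hat_mats n \<Longrightarrow> reindex_mat n s t M \<in> hat_mats n"
  by (auto simp: hat_mats_def s_less t_less s0 t0)

lemma LambdaL_reindex_mat:
  "M \<in> carrier_mat n n \<Longrightarrow> LambdaL n (reindex_mat n s t M) = reindex_mat n s t (LambdaL n M)"
  by (intro eq_matI) (auto simp: LambdaL_def s_less t_less s0 t0)

end
end

lemma Phi_reindex_mat:
  fixes A :: "'a::ring_1 mat"
  assumes s: "s permutes {..<n}" "s 0 = 0" and t: "t permutes {..<n}" "t 0 = 0"
    and A: "A \<in> dom_Phi n"
  shows "reindex_mat n s t A \<in> dom_Phi n"
    and "Phi n (reindex_mat n s t A) = reindex_mat n s t (Phi n A)"
proof -
  from A have Ai: "A \<in> inv_mats n" and AJ: "mat_inv n A \<in> unit_mats n"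
    and Ah: "A \<in> hat_mats n" and Au: "A \<in> unit_mats n"
    by (auto simp: dom_Phi_def dom_J_def J1_def)
  note inv = reindex_mat_inv_mats[OF s(1) t(1) Ai]
  show "reindex_mat n s t A \<in> dom_Phi n"
    using inv reindex_mat_unit_mats[OF t(1) s(1) AJ] reindex_mat_hat_mats[OF s(1) t(1) s(2) t(2) Ah]
      reindex_mat_unit_mats[OF s(1) t(1) Au]
    by (auto simp: dom_Phi_def dom_J_def J1_def)
  show "Phi n (reindex_mat n s t A) = reindex_mat n s t (Phi n A)"
    unfolding Phi_def inv(2)
    using LambdaL_reindex_mat[OF t(1) s(1) t(2) s(2) inv_mats_mat_inv(1)[OF Ai]]
      J2_reindex_mat[OF t(1) s(1) LambdaL_carrier]
    by simp
qed

lemma Psi_reindex_mat: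
  fixes A :: "'a::ring_1 mat"
  assumes s: "s permutes {..<n}" "s 0 = 0" and t: "t permutes {..<n}" "t 0 = 0"
    and A: "A \<in> dom_Psi n"
  shows "reindex_mat n s t A \<in> dom_Psi n"
    and "Psi n (reindex_mat n s t A) = reindex_mat n s t (Psi n A)"
proof -
  from A have Au: "A \<in> unit_mats n" and AJ: "J2 n A \<in> dom_Phi n"
    and APhi: "Phi n (J2 n A) \<in> unit_mats n"
    by (auto simp: dom_Psi_def)
  have "A \<in> carrier_mat n n" using Au unfolding unit_mats_def by blast
  then have J: "J2 n (reindex_mat n s t A) = reindex_mat n t s (J2 n A)"
    by (rule J2_reindex_mat[OF s(1) t(1)])
  note Phi = Phi_reindex_mat[OF t s AJ]
  show "reindex_mat n s t A \<in> dom_Psi n"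
    unfolding dom_Psi_def
    using reindex_mat_unit_mats[OF s(1) t(1) Au] J Phi reindex_mat_unit_mats[OF t(1) s(1) APhi]
    by auto
  show "Psi n (reindex_mat n s t A) = reindex_mat n s t (Psi n A)"
    unfolding Psi_def J Phi(2) using J2_reindex_mat[OF t(1) s(1) Phi_carrier] .
qed

lemma perm_mats_reindex_mat:
  assumes "P \<in> perm_mats n"
  obtains \<sigma> where "\<sigma> permutes {..<n}" "P = reindex_mat n id \<sigma> (1\<^sub>m n :: 'a::ring_1 mat)"
proof -
  from assms obtain \<sigma> where \<sigma>: "\<sigma> permutes {..<n}"
    and P: "P = mat n n (\<lambda>(j,k). if j = \<sigma> k then (1::'a) else 0)"
    unfolding perm_mats_def by blast
  have "P = reindex_mat n id \<sigma> (1\<^sub>m n)"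
    unfolding P by (intro eq_matI) (auto simp: permutes_lessThan_less[OF \<sigma>])
  with \<sigma> that show ?thesis by blast
qed

lemma permutes_fixes_0_if_fixes_unit_vec_0:
  assumes n: "n \<ge> 1" and \<sigma>: "\<sigma> permutes {..<n}"
    and fixes_unit: "reindex_mat n id \<sigma> (1\<^sub>m n) *\<^sub>v unit_vec n 0 = (unit_vec n 0 :: 'a::ring_1 vec)"
  shows "\<sigma> 0 = 0"
proof (rule ccontr)
  assume ne: "\<sigma> 0 \<noteq> 0"
  have less: "\<sigma> 0 < n" using n permutes_lessThan_less[OF \<sigma>] by simp
  have "(reindex_mat n id \<sigma> (1\<^sub>m n) *\<^sub>v unit_vec n 0) $ \<sigma> 0 = (1::'a)"
    using less n by (simp add: permutes_lessThan_less[OF \<sigma>])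
  moreover have "(unit_vec n 0 :: 'a vec) $ \<sigma> 0 = 0" using less ne by simp
  ultimately show False using fixes_unit by simp
qed

lemma act_perm_mats_reindex_mat:
  fixes M :: "'a::ring_1 mat"
  assumes s: "s permutes {..<n}" and t: "t permutes {..<n}" and M: "M \<in> carrier_mat n n"
  shows "act n (reindex_mat n id s (1\<^sub>m n), reindex_mat n id t (1\<^sub>m n)) M = reindex_mat n s t M"
proof -
  have id: "id permutes {..<n}" by (simp add: permutes_id)
  have one_inv: "mat_inv n (1\<^sub>m n) = (1\<^sub>m n :: 'a mat)"
    by (rule mat_inv_eqI) simp_all
  have "(1\<^sub>m n :: 'a mat) \<in> inv_mats n"
    unfolding inv_mats_def by force
  then have "mat_inv n (reindex_mat n id s (1\<^sub>m n)) = reindex_mat n s id (mat_inv n (1\<^sub>m n :: 'a mat))"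
    by (rule reindex_mat_inv_mats(2)[OF id s])
  then have inv: "mat_inv n (reindex_mat n id s (1\<^sub>m n)) = reindex_mat n s id (1\<^sub>m n :: 'a mat)"
    unfolding one_inv .
  have "reindex_mat n s id (1\<^sub>m n) * M * reindex_mat n id t (1\<^sub>m n)
      = reindex_mat n s id (1\<^sub>m n) * reindex_mat n id id M * reindex_mat n id t (1\<^sub>m n)"
    using reindex_mat_id[OF M] by simp
  also have "\<dots> = reindex_mat n s t M"
    using reindex_mat_mult[OF id, of s id "1\<^sub>m n" M] reindex_mat_mult[OF id, of s t M "1\<^sub>m n"]
      s t M by (simp add: permutes_lessThan_less)
  finally show ?thesis by (simp add: act_def inv)
qed

theorem lemma4:
  fixes n :: nat and P1 P2 :: "'a::ring_1 mat"
  assumes "n \<ge> 1" and "(P1, P2) \<in> P0LR n"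
  shows "(\<forall>A \<in> dom_Phi n. act n (P1,P2) A \<in> dom_Phi n \<and>
            Phi n (act n (P1,P2) A) = act n (P1,P2) (Phi n A)) \<and>
         (\<forall>A \<in> dom_Psi n. act n (P1,P2) A \<in> dom_Psi n \<and>
            Psi n (act n (P1,P2) A) = act n (P1,P2) (Psi n A))"
proof -
  from assms(2) have "P1 \<in> perm_mats n" "P2 \<in> perm_mats n"
    and fix1: "P1 *\<^sub>v unit_vec n 0 = unit_vec n 0" and fix2: "P2 *\<^sub>v unit_vec n 0 = unit_vec n 0"
    unfolding P0LR_def by auto
  then obtain s t where s: "s permutes {..<n}" and P1: "P1 = reindex_mat n id s (1\<^sub>m n)"
    and t: "t permutes {..<n}" and P2: "P2 = reindex_mat n id t (1\<^sub>m n)"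
    by (metis perm_mats_reindex_mat)
  have s0: "s 0 = 0" using permutes_fixes_0_if_fixes_unit_vec_0[OF assms(1) s] fix1 P1 by simp
  have t0: "t 0 = 0" using permutes_fixes_0_if_fixes_unit_vec_0[OF assms(1) t] fix2 P2 by simp
  have act: "act n (P1,P2) M = reindex_mat n s t M" if "M \<in> carrier_mat n n" for M
    using act_perm_mats_reindex_mat[OF s t that] P1 P2 by simp
  have carrier: "A \<in> carrier_mat n n" if "A \<in> dom_Phi n \<or> A \<in> dom_Psi n" for A :: "'a mat"
    using that by (auto simp: dom_Phi_def dom_Psi_def unit_mats_def)
  show ?thesis
  proof (intro conjI ballI)
    fix A :: "'a mat" assume "A \<in> dom_Phi n"
    then show "act n (P1,P2) A \<in> dom_Phi n" "Phi n (act n (P1,P2) A) = act n (P1,P2) (Phi n A)"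
      using Phi_reindex_mat[OF s s0 t t0] carrier act by auto
  next
    fix A :: "'a mat" assume "A \<in> dom_Psi n"
    then show "act n (P1,P2) A \<in> dom_Psi n" "Psi n (act n (P1,P2) A) = act n (P1,P2) (Psi n A)"
      using Psi_reindex_mat[OF s s0 t t0] carrier act by auto
  qed
qed

end
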